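(* Let $1\le d$ and $n\ge d+2$ be integers, let $I\subseteq[n]$ with $|I|=d+1$, and let $A_I\subseteq V(P(d,n))$ be the set of $d$-tuples with pairwise distinct entries from $I$. Then the induced subgraph $P(d,n)[A_I]$ is isomorphic to $P(d,d+1)$ (hence bipartite), and for every maximal clique $K$ of $P(d,n)$, $|V(K)\cap A_I|\in\{0,2\}$.
   Context: For integers $1\le d\le n$, the partial permutation graph $P(d,n)$ has as vertices all $d$-tuples with pairwise distinct entries from $[n]=\{1,\dots,n\}$, two being adjacent iff they differ in exactly one coordinate. *)

theory Defs
  imports Main
begin

definition ppg_vertices :: "nat \<Rightarrow> nat \<Rightarrow> nat list set" where
  "ppg_vertices d n = {xs. length xs = d \<and> distinct xs \<and> set xs \<subseteq> {1..n}}"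

definition ppg_adj :: "nat list \<Rightarrow> nat list \<Rightarrow> bool" where
  "ppg_adj xs ys \<longleftrightarrow> length xs = length ys \<and> card {i. i < length xs \<and> xs ! i \<noteq> ys ! i} = 1"

definition graph_iso :: "'a set \<Rightarrow> ('a \<Rightarrow> 'a \<Rightarrow> bool) \<Rightarrow> 'b set \<Rightarrow> ('b \<Rightarrow> 'b \<Rightarrow> bool) \<Rightarrow> bool" where
  "graph_iso V E W F \<longleftrightarrow> (\<exists>f. bij_betw f V W \<and> (\<forall>u\<in>V. \<forall>v\<in>V. E u v \<longleftrightarrow> F (f u) (f v)))"

definition bipartite :: "'a set \<Rightarrow> ('a \<Rightarrow> 'a \<Rightarrow> bool) \<Rightarrow> bool" where
  "bipartite V E \<longleftrightarrow> (\<exists>c :: 'a \<Rightarrow> bool. \<forall>u\<in>V. \<forall>v\<in>V. E u v \<longrightarrow> c u \<noteq> c v)"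

definition is_clique :: "'a set \<Rightarrow> ('a \<Rightarrow> 'a \<Rightarrow> bool) \<Rightarrow> 'a set \<Rightarrow> bool" where
  "is_clique V E K \<longleftrightarrow> K \<subseteq> V \<and> (\<forall>u\<in>K. \<forall>v\<in>K. u \<noteq> v \<longrightarrow> E u v)"

definition is_maximal_clique :: "'a set \<Rightarrow> ('a \<Rightarrow> 'a \<Rightarrow> bool) \<Rightarrow> 'a set \<Rightarrow> bool" where
  "is_maximal_clique V E K \<longleftrightarrow> is_clique V E K \<and> (\<forall>K'. is_clique V E K' \<and> K \<subseteq> K' \<longrightarrow> K' = K)"

end

theory Submission
  imports Defs "HOL-Combinatorics.Permutations"
begin

(*
  The vertex set A_I of the theorem is the set "tuples d I" of d-tuples with distinct
  entries from I, and adjacency only compares coordinates.  Hence: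

  1. Relabelling entries along any bijection I -> J preserves adjacency, so the graph on
     "tuples d I" only depends on card I.  With card I = d + 1 this gives the isomorphism
     with P(d, d+1) = tuples d {1..d+1}, and also with tuples d {0..d}.
  2. A tuple over a (d+1)-set misses exactly one element; appending it yields a
     permutation of the index set, and two adjacent tuples give permutations differing
     by a transposition.  So the parity of this permutation is a proper 2-colouring of
     tuples d {0..d}, which transfers to A_I along the isomorphism.
  3. Every maximal clique of P(d,n) is a "line": all vertices agreeing with a fixed v
     outside one coordinate i.  Such a line meets A_I in the tuples v[i := b] with b in I;
     these exist only when the d - 1 fixed entries lie in I, and then b ranges over the
     two remaining elements of I.
*)

definition tuples :: "nat \<Rightarrow> 'a set \<Rightarrow> 'a list set" where
  "tuples d S = {xs. length xs = d \<and> distinct xs \<and> set xs \<subseteq> S}"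

lemma ppg_adj_iff:
  "ppg_adj u v \<longleftrightarrow> length u = length v \<and>
     (\<exists>i<length u. u ! i \<noteq> v ! i \<and> (\<forall>j<length u. j \<noteq> i \<longrightarrow> u ! j = v ! j))"
proof -
  have "{j. j < length u \<and> u ! j \<noteq> v ! j} = {i} \<longleftrightarrow>
          i < length u \<and> u ! i \<noteq> v ! i \<and> (\<forall>j<length u. j \<noteq> i \<longrightarrow> u ! j = v ! j)" for i
    by blast
  then show ?thesis unfolding ppg_adj_def One_nat_def card_1_singleton_iff by auto
qed

lemma ppg_adj_map_iff:
  assumes "inj_on h (set u \<union> set v)"
  shows "ppg_adj (map h u) (map h v) \<longleftrightarrow> ppg_adj u v"
proof -
  have same: "map h u ! i = map h v ! i \<longleftrightarrow> u ! i = v ! i"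
    if "i < length u" "length u = length v" for i
  proof -
    have "u ! i \<in> set u \<union> set v" "v ! i \<in> set u \<union> set v" using that by simp_all
    then show ?thesis using that inj_on_eq_iff[OF assms] by simp
  qed
  have "{i. i < length u \<and> map h u ! i \<noteq> map h v ! i} = {i. i < length u \<and> u ! i \<noteq> v ! i}"
    if "length u = length v"
    using same[OF _ that] by blast
  then show ?thesis by (cases "length u = length v") (simp_all add: ppg_adj_def)
qed

lemma map_tuples_subset:
  assumes "bij_betw h S T"
  shows "map h ` tuples d S \<subseteq> tuples d T"
  using assms by (force simp: tuples_def distinct_map bij_betw_def intro: inj_on_subset)

lemma bij_betw_map_tuples:
  assumes h: "bij_betw h S T"
  shows "bij_betw (map h) (tuples d S) (tuples d T)"
proof (rule bij_betw_byWitness[where f' = "map (inv_into S h)"])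
  have g: "bij_betw (inv_into S h) T S" using h by (rule bij_betw_inv_into)
  show "\<forall>xs\<in>tuples d S. map (inv_into S h) (map h xs) = xs"
    using h by (auto simp: tuples_def bij_betw_def subset_iff intro!: map_idI inv_into_f_f)
  show "\<forall>ys\<in>tuples d T. map h (map (inv_into S h) ys) = ys"
    using h by (auto simp: tuples_def bij_betw_def subset_iff f_inv_into_f intro!: map_idI)
  show "map h ` tuples d S \<subseteq> tuples d T" using h by (rule map_tuples_subset)
  show "map (inv_into S h) ` tuples d T \<subseteq> tuples d S" using g by (rule map_tuples_subset)
qed

lemma tuples_iso:
  fixes S T :: "nat set"
  assumes "finite S" "finite T" "card S = card T"
  shows "graph_iso (tuples d S) ppg_adj (tuples d T) ppg_adj"
proof -
  obtain h where h: "bij_betw h S T" using finite_same_card_bij[OF assms] by blast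
  have "ppg_adj u v \<longleftrightarrow> ppg_adj (map h u) (map h v)"
    if "u \<in> tuples d S" "v \<in> tuples d S" for u v
  proof -
    have "inj_on h (set u \<union> set v)"
      using that h by (auto simp: tuples_def bij_betw_def intro: inj_on_subset)
    then show ?thesis by (simp add: ppg_adj_map_iff)
  qed
  then show ?thesis using bij_betw_map_tuples[OF h] unfolding graph_iso_def by blast
qed

lemma bipartite_iso:
  assumes "graph_iso V E W F" and "bipartite W F"
  shows "bipartite V E"
proof -
  obtain f where f: "bij_betw f V W" and adj: "\<forall>u\<in>V. \<forall>v\<in>V. E u v \<longleftrightarrow> F (f u) (f v)"
    using assms(1) unfolding graph_iso_def by blast
  obtain c :: "'b \<Rightarrow> bool" where c: "\<forall>u\<in>W. \<forall>v\<in>W. F u v \<longrightarrow> c u \<noteq> c v"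
    using assms(2) unfolding bipartite_def by blast
  have "c (f u) \<noteq> c (f v)" if "u \<in> V" "v \<in> V" "E u v" for u v
  proof -
    have "f u \<in> W" "f v \<in> W" using that bij_betw_apply[OF f] by simp_all
    moreover have "F (f u) (f v)" using adj that by simp
    ultimately show ?thesis using c by simp
  qed
  then show ?thesis unfolding bipartite_def by (intro exI[of _ "c \<circ> f"]) simp
qed

(* The element of S not occurring in a tuple over S (unique when card S = length + 1). *)
definition missing :: "'a set \<Rightarrow> 'a list \<Rightarrow> 'a" where
  "missing S xs = (THE x. x \<in> S - set xs)"

lemma missing_unique:
  assumes "finite S" "card S = Suc d" "xs \<in> tuples d S"
  shows "S - set xs = {missing S xs}"
proof -
  have "card (S - set xs) = 1"
    using assms by (simp add: tuples_def card_Diff_subset distinct_card finite_subset)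
  then obtain x where x: "S - set xs = {x}" by (auto simp: card_1_singleton_iff)
  then have "missing S xs = x" unfolding missing_def by auto
  then show ?thesis using x by simp
qed

lemma adjacent_takes_missing:
  assumes S: "finite S" "card S = Suc d" and u: "u \<in> tuples d S" and v: "v \<in> tuples d S"
    and i: "i < d" and ne: "u ! i \<noteq> v ! i" and agree: "\<forall>j<d. j \<noteq> i \<longrightarrow> u ! j = v ! j"
  shows "v ! i = missing S u"
proof -
  have "v ! i \<notin> set u"
  proof
    assume "v ! i \<in> set u"
    then obtain k where k: "k < d" "u ! k = v ! i" using u by (auto simp: tuples_def in_set_conv_nth)
    then have "k \<noteq> i" using ne by auto
    then have "v ! k = v ! i" using k agree by simp
    then show False using \<open>k \<noteq> i\<close> k i v by (simp add: tuples_def nth_eq_iff_index_eq)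
  qed
  moreover have "v ! i \<in> S" using v i by (auto simp: tuples_def)
  ultimately show ?thesis using missing_unique[OF S u] by blast
qed

definition completion_perm :: "nat \<Rightarrow> nat list \<Rightarrow> nat \<Rightarrow> nat" where
  "completion_perm d xs k = (if k < Suc d then (xs @ [missing {..<Suc d} xs]) ! k else k)"

lemma completion_perm_permutes:
  assumes xs: "xs \<in> tuples d {..<Suc d}"
  shows "completion_perm d xs permutes {..<Suc d}"
proof (rule bij_imp_permutes)
  let ?ys = "xs @ [missing {..<Suc d} xs]"
  have "distinct ?ys" and "set ?ys = {..<Suc d}" and "length ?ys = Suc d"
    using missing_unique[OF _ _ xs] xs by (auto simp: tuples_def)
  then have "bij_betw (nth ?ys) {..<Suc d} {..<Suc d}" by (intro bij_betw_nth) auto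
  then show "bij_betw (completion_perm d xs) {..<Suc d} {..<Suc d}"
    by (rule bij_betw_cong[THEN iffD1, rotated]) (simp add: completion_perm_def)
  show "completion_perm d xs k = k" if "k \<notin> {..<Suc d}" for k
    using that by (simp add: completion_perm_def)
qed

lemma completion_perm_adjacent:
  assumes u: "u \<in> tuples d {..<Suc d}" and v: "v \<in> tuples d {..<Suc d}"
    and i: "i < d" and ne: "u ! i \<noteq> v ! i" and agree: "\<forall>j<d. j \<noteq> i \<longrightarrow> u ! j = v ! j"
  shows "completion_perm d v = completion_perm d u \<circ> transpose i d"
proof
  fix k
  have vi: "v ! i = missing {..<Suc d} u"
    by (rule adjacent_takes_missing[OF _ _ u v i ne agree]) simp_all
  have ui: "u ! i = missing {..<Suc d} v"
    by (rule adjacent_takes_missing[OF _ _ v u i]) (use ne agree in auto)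
  have len: "length u = d" "length v = d" using u v by (auto simp: tuples_def)
  consider "k = i" | "k = d" | "k \<noteq> i" "k \<noteq> d"  by blast
  then show "completion_perm d v k = (completion_perm d u \<circ> transpose i d) k"
    by cases (use i len vi ui agree in \<open>auto simp: completion_perm_def nth_append\<close>)
qed

lemma tuples_bipartite: "bipartite (tuples d {..<Suc d}) ppg_adj"
  unfolding bipartite_def
proof (intro exI[of _ "\<lambda>xs. evenperm (completion_perm d xs)"] ballI impI)
  fix u v assume u: "u \<in> tuples d {..<Suc d}" and v: "v \<in> tuples d {..<Suc d}" and "ppg_adj u v"
  then obtain i where i: "i < d" "u ! i \<noteq> v ! i" and agree: "\<forall>j<d. j \<noteq> i \<longrightarrow> u ! j = v ! j"
    by (auto simp: ppg_adj_iff tuples_def)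
  have "permutation (completion_perm d u)"
    using completion_perm_permutes[OF u] permutes_imp_permutation by blast
  then have "evenperm (completion_perm d v) \<longleftrightarrow> evenperm (completion_perm d u) = evenperm (transpose i d)"
    unfolding completion_perm_adjacent[OF u v i agree] by (simp add: evenperm_comp permutation_swap_id)
  then show "evenperm (completion_perm d u) \<noteq> evenperm (completion_perm d v)"
    using i by (simp add: evenperm_swap)
qed

definition line :: "nat \<Rightarrow> nat \<Rightarrow> nat list \<Rightarrow> nat \<Rightarrow> nat list set" where
  "line d n v i = {w \<in> ppg_vertices d n. \<forall>j<d. j \<noteq> i \<longrightarrow> w ! j = v ! j}"

lemma line_clique:
  assumes "i < d"
  shows "is_clique (ppg_vertices d n) ppg_adj (line d n v i)"
  unfolding is_clique_def
proof (intro conjI ballI impI)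
  show "line d n v i \<subseteq> ppg_vertices d n" by (auto simp: line_def)
  fix u w assume u: "u \<in> line d n v i" and w: "w \<in> line d n v i" and "u \<noteq> w"
  have len: "length u = d" "length w = d" using u w by (auto simp: line_def ppg_vertices_def)
  have agree: "\<forall>j<d. j \<noteq> i \<longrightarrow> u ! j = w ! j" using u w by (auto simp: line_def)
  have "u ! i \<noteq> w ! i"
    using \<open>u \<noteq> w\<close> len agree by (metis nth_equalityI)
  then show "ppg_adj u w" using len agree assms by (auto simp: ppg_adj_iff)
qed

(* All vertices of a clique through v differ from v in one common coordinate: if
   u, w differed from v at distinct coordinates, they would differ from each other at two. *)
lemma clique_in_line:
  assumes d: "1 \<le> d" and K: "is_clique (ppg_vertices d n) ppg_adj K" and v: "v \<in> K"
  shows "\<exists>i<d. K \<subseteq> line d n v i"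
proof (cases "K = {v}")
  case True
  then have "K \<subseteq> line d n v 0" using K by (auto simp: line_def is_clique_def)
  then show ?thesis using d by (intro exI[of _ 0]) auto
next
  case False
  then obtain u where u: "u \<in> K" "u \<noteq> v" using v by blast
  have KV: "K \<subseteq> ppg_vertices d n" using K by (simp add: is_clique_def)
  have adj: "ppg_adj x y" if "x \<in> K" "y \<in> K" "x \<noteq> y" for x y
    using K that by (simp add: is_clique_def)
  have len: "length x = d" if "x \<in> K" for x using that KV by (auto simp: ppg_vertices_def)
  obtain i where i: "i < d" "v ! i \<noteq> u ! i" and agree_u: "\<forall>j<d. j \<noteq> i \<longrightarrow> v ! j = u ! j"
    using adj[OF v u(1)] u len[OF v] by (auto simp: ppg_adj_iff)
  have "w \<in> line d n v i" if w: "w \<in> K" "w \<noteq> v" for w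
  proof -
    obtain k where k: "k < d" "v ! k \<noteq> w ! k" and agree_w: "\<forall>j<d. j \<noteq> k \<longrightarrow> v ! j = w ! j"
      using adj[OF v w(1)] w len[OF v] by (auto simp: ppg_adj_iff)
    have "k = i"
    proof (rule ccontr)
      assume "k \<noteq> i"
      then have "u \<noteq> w" using k agree_u by auto
      then obtain l where "\<forall>j<d. j \<noteq> l \<longrightarrow> u ! j = w ! j"
        using adj[OF u(1) w(1)] len[OF u(1)] by (auto simp: ppg_adj_iff)
      then show False using \<open>k \<noteq> i\<close> i k agree_u agree_w by metis
    qed
    then show ?thesis using w KV agree_w by (auto simp: line_def)
  qed
  then have "K \<subseteq> line d n v i" using v KV by (auto simp: line_def)
  then show ?thesis using i by blast
qed

(* Hence every maximal clique of P(d,n) is a line; d <= n ensures P(d,n), and so the clique,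
   is nonempty. *)
lemma maximal_clique_is_line:
  assumes d: "1 \<le> d" "d \<le> n" and K: "is_maximal_clique (ppg_vertices d n) ppg_adj K"
  shows "\<exists>v\<in>ppg_vertices d n. \<exists>i<d. K = line d n v i"
proof -
  have clique: "is_clique (ppg_vertices d n) ppg_adj K"
    and maximal: "\<And>K'. is_clique (ppg_vertices d n) ppg_adj K' \<Longrightarrow> K \<subseteq> K' \<Longrightarrow> K' = K"
    using K unfolding is_maximal_clique_def by auto
  have "[1..<Suc d] \<in> ppg_vertices d n" using d by (auto simp: ppg_vertices_def)
  then have "K \<noteq> {}"
    using maximal[of "{[1..<Suc d]}"] by (auto simp: is_clique_def)
  then obtain v where v: "v \<in> K" by blast
  then obtain i where "i < d" "K \<subseteq> line d n v i" using clique_in_line[OF d(1) clique] by blast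
  then have "K = line d n v i" using maximal line_clique by metis
  moreover have "v \<in> ppg_vertices d n" using v clique by (auto simp: is_clique_def)
  ultimately show ?thesis using \<open>i < d\<close> by blast
qed

lemma line_eq_updates:
  assumes v: "v \<in> ppg_vertices d n" and i: "i < d"
  shows "line d n v i = (\<lambda>b. v[i := b]) ` ({1..n} - (set v - {v ! i}))"
proof
  have len: "length v = d" and dist: "distinct v" using v by (auto simp: ppg_vertices_def)
  show "line d n v i \<subseteq> (\<lambda>b. v[i := b]) ` ({1..n} - (set v - {v ! i}))"
  proof
    fix w assume w: "w \<in> line d n v i"
    then have lenw: "length w = d" and distw: "distinct w" and setw: "set w \<subseteq> {1..n}"
      and agree: "\<forall>j<d. j \<noteq> i \<longrightarrow> w ! j = v ! j"
      by (auto simp: line_def ppg_vertices_def)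
    have "w = v[i := w ! i]"
      by (rule nth_equalityI) (use i len lenw agree in \<open>auto simp: nth_list_update\<close>)
    moreover have "w ! i \<notin> set v - {v ! i}"
      using len lenw agree distw i by (auto simp: in_set_conv_nth nth_eq_iff_index_eq)
    moreover have "w ! i \<in> {1..n}" using setw lenw i nth_mem by blast
    ultimately show "w \<in> (\<lambda>b. v[i := b]) ` ({1..n} - (set v - {v ! i}))" by blast
  qed
  show "(\<lambda>b. v[i := b]) ` ({1..n} - (set v - {v ! i})) \<subseteq> line d n v i"
    using v i len dist by (auto simp: line_def ppg_vertices_def set_update_distinct distinct_list_update)
qed

(* A line meets tuples d I in 0 vertices, or in exactly the 2 updates by I - W, where W
   are the d - 1 fixed entries. *)
lemma line_meets_tuples:
  assumes v: "v \<in> ppg_vertices d n" and i: "i < d"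
    and I: "I \<subseteq> {1..n}" and card_I: "card I = Suc d"
  shows "card (line d n v i \<inter> tuples d I) \<in> {0, 2}"
proof -
  define W where "W = set v - {v ! i}"
  have len: "length v = d" and dist: "distinct v" using v by (auto simp: ppg_vertices_def)
  have set_upd: "set (v[i := b]) = insert b W" for b
    using dist i len by (simp add: W_def set_update_distinct)
  have "line d n v i \<inter> tuples d I = {w \<in> line d n v i. set w \<subseteq> I}"
    by (auto simp: line_def ppg_vertices_def tuples_def)
  also have "\<dots> = (\<lambda>b. v[i := b]) ` {b \<in> {1..n} - W. insert b W \<subseteq> I}"
    unfolding line_eq_updates[OF v i, folded W_def] using set_upd by auto
  finally have slice:
    "line d n v i \<inter> tuples d I = (\<lambda>b. v[i := b]) ` {b \<in> {1..n} - W. insert b W \<subseteq> I}" .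
  show ?thesis
  proof (cases "W \<subseteq> I")
    case True
    have "card W = d - 1" using dist len i by (simp add: W_def distinct_card card_Diff_singleton)
    moreover have "finite I" using I finite_subset by blast
    ultimately have "card (I - W) = 2"
      using True card_I i by (simp add: card_Diff_subset finite_subset)
    moreover have "inj_on (\<lambda>b. v[i := b]) (I - W)"
      using i len by (intro inj_onI) (metis nth_list_update_eq)
    moreover have "{b \<in> {1..n} - W. insert b W \<subseteq> I} = I - W" using True I by auto
    ultimately show ?thesis by (simp add: slice card_image)
  next
    case False
    then have "{b \<in> {1..n} - W. insert b W \<subseteq> I} = {}" by auto
    then show ?thesis by (simp add: slice)
  qed
qed

theorem mainTheorem6:
  fixes d n :: nat and I :: "nat set"
  assumes "1 \<le> d" and "n \<ge> d + 2"
    and "I \<subseteq> {1..n}" and "card I = d + 1"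
  defines "A \<equiv> {xs \<in> ppg_vertices d n. set xs \<subseteq> I}"
  shows "graph_iso A ppg_adj (ppg_vertices d (d + 1)) ppg_adj
         \<and> bipartite A ppg_adj
         \<and> (\<forall>K. is_maximal_clique (ppg_vertices d n) ppg_adj K \<longrightarrow> card (K \<inter> A) \<in> {0, 2})"
proof (intro conjI allI impI)
  have A: "A = tuples d I" using assms(3) by (auto simp: A_def ppg_vertices_def tuples_def)
  have "finite I" using assms(3) finite_subset by blast
  show "graph_iso A ppg_adj (ppg_vertices d (d + 1)) ppg_adj"
    using tuples_iso[of I "{1..d+1}"] \<open>finite I\<close> assms(4)
    by (simp add: A ppg_vertices_def tuples_def)
  have "graph_iso A ppg_adj (tuples d {..<Suc d}) ppg_adj"
    using tuples_iso[of I "{..<Suc d}"] \<open>finite I\<close> assms(4) by (simp add: A)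
  then show "bipartite A ppg_adj" using tuples_bipartite by (rule bipartite_iso)
  fix K assume K: "is_maximal_clique (ppg_vertices d n) ppg_adj K"
  have "d \<le> n" using assms(2) by simp
  then obtain v i where v: "v \<in> ppg_vertices d n" and i: "i < d" and line: "K = line d n v i"
    using maximal_clique_is_line[OF assms(1) _ K] by blast
  have "card I = Suc d" using assms(4) by simp
  then show "card (K \<inter> A) \<in> {0, 2}"
    unfolding line A by (rule line_meets_tuples[OF v i assms(3)])
qed

end
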